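(* Let $\tau$ be any substitution and let $g=(v,aub,w)$ be a generator for $\tau$ whose center has at least two letters, where $v,w\in\mathcal{A}^+$, $u\in\mathcal{A}^*$ and $a,b\in\mathcal{A}$. Then $g$ is basic if and only if $|\tau(a)|>|v|$ and $|\tau(b)|>|w|$.
   Context: Let $\mathcal{A}$ be a finite nonempty alphabet, $\mathcal{A}^*$ the finite words over $\mathcal{A}$ (including the empty word), $\mathcal{A}^+$ the nonempty words, $|u|$ the length of $u$. A word $u$ is a factor of $v$ if $v=w_1uw_2$ for some words $w_1,w_2$. A substitution is a map $\tau:\mathcal{A}\to\mathcal{A}^+$ extended to a concatenation-respecting map on words. The language $\mathcal{L}(\tau)$ is the set of words that are factors of $\tau^n(a)$ for some letter $a$ and some $n\ge1$. A generator for $\tau$ is a triple $(v,u,w)$ with $v,u,w\in\mathcal{A}^+$, $u\in\mathcal{L}(\tau)$ and $\tau(u)=vuw$; $v$, $u$, $w$ are its left wing, center and right wing, and its length is $|u|$. If $(v,u,cw)$ is a generator with $c\in\mathcal{A}$, $w\in\mathcal{A}^*$, its right extension is the generator $(v,uc,w\tau(c))$; if $(vc,u,w)$ is a generator with $c\in\mathcal{A}$, $v\in\mathcal{A}^*$, its left extension is the generator $(\tau(c)v,cu,w)$. Two generators $g_1,g_2$ are G related ($g_1\sim_G g_2$) if there is a generator $g_3$ obtainable from $g_1$ and also from $g_2$ by finite (possibly empty) sequences of left and right extensions. A generator is basic if it is not G related to any generator of smaller length. *)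

theory Defs
  imports Main
begin

definition subst_word :: "('a \<Rightarrow> 'a list) \<Rightarrow> 'a list \<Rightarrow> 'a list" where
  "subst_word \<tau> w = concat (map \<tau> w)"

definition is_factor :: "'a list \<Rightarrow> 'a list \<Rightarrow> bool" where
  "is_factor u v \<longleftrightarrow> (\<exists>w1 w2. v = w1 @ u @ w2)"

definition subst_lang :: "('a \<Rightarrow> 'a list) \<Rightarrow> 'a list set" where
  "subst_lang \<tau> = {u. \<exists>a n. n \<ge> 1 \<and> is_factor u ((subst_word \<tau> ^^ n) [a])}"

type_synonym 'a gen = "'a list \<times> 'a list \<times> 'a list"

definition generator :: "('a \<Rightarrow> 'a list) \<Rightarrow> 'a gen \<Rightarrow> bool" where
  "generator \<tau> g \<longleftrightarrow> (case g of (v, u, w) \<Rightarrow>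
     v \<noteq> [] \<and> u \<noteq> [] \<and> w \<noteq> [] \<and> u \<in> subst_lang \<tau> \<and> subst_word \<tau> u = v @ u @ w)"

definition gen_length :: "'a gen \<Rightarrow> nat" where
  "gen_length g = length (fst (snd g))"

inductive ext_step :: "('a \<Rightarrow> 'a list) \<Rightarrow> 'a gen \<Rightarrow> 'a gen \<Rightarrow> bool" for \<tau> where
  right_ext: "generator \<tau> (v, u, c # w) \<Longrightarrow> ext_step \<tau> (v, u, c # w) (v, u @ [c], w @ \<tau> c)"
| left_ext: "generator \<tau> (v @ [c], u, w) \<Longrightarrow> ext_step \<tau> (v @ [c], u, w) (\<tau> c @ v, c # u, w)"

definition G_related :: "('a \<Rightarrow> 'a list) \<Rightarrow> 'a gen \<Rightarrow> 'a gen \<Rightarrow> bool" where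
  "G_related \<tau> g1 g2 \<longleftrightarrow> (\<exists>g3. (ext_step \<tau>)\<^sup>*\<^sup>* g1 g3 \<and> (ext_step \<tau>)\<^sup>*\<^sup>* g2 g3)"

definition basic :: "('a \<Rightarrow> 'a list) \<Rightarrow> 'a gen \<Rightarrow> bool" where
  "basic \<tau> g \<longleftrightarrow> generator \<tau> g \<and>
     \<not> (\<exists>g'. generator \<tau> g' \<and> G_related \<tau> g g' \<and> gen_length g' < gen_length g)"

end

theory Submission
  imports Defs
begin

text \<open>If \<open>|\<tau>(a)| \<le> |v|\<close>, then \<open>v = \<tau>(a) v'\<close> and \<open>g\<close> is the left extension of the shorter
  generator \<open>(v'a, ub, w)\<close>, so \<open>g\<close> is not basic; symmetrically for \<open>b\<close>. Conversely, along any
  chain of extensions from \<open>(v, U, w)\<close> to \<open>(V, xUy, W)\<close> one has \<open>\<tau>(x) v = V x\<close> and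
  \<open>w \<tau>(y) = y W\<close>. If a shorter generator \<open>(v', U', w')\<close> reaches the same \<open>(V, U\<^sub>3, W)\<close>, its
  centre occurs in \<open>U\<^sub>3\<close> either strictly right of the start of \<open>aub\<close> or strictly left of its
  end; in the first case comparing lengths in the two identities yields
  \<open>|\<tau>(a)| + |v'| - 1 + (|\<tau>(z)| - |z|) = |v|\<close>, so \<open>|\<tau>(a)| \<le> |v|\<close> since \<tau> is non-erasing,
  and symmetrically in the second case.\<close>

lemma append_eq_append_prefix:
  assumes "p @ q = r @ w" and "length p \<le> length r"
  obtains r' where "r = p @ r'"
proof -
  obtain us where "r @ us = p \<and> w = us @ q \<or> r = p @ us \<and> us @ w = q"
    using assms(1) by (auto simp: append_eq_append_conv2)
  with assms(2) that show thesis by auto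
qed

lemma append_eq_append_suffix:
  assumes "p @ q = r @ w" and "length q \<le> length w"
  obtains w' where "w = w' @ q"
proof -
  obtain us where "r @ us = p \<and> w = us @ q \<or> r = p @ us \<and> us @ w = q"
    using assms(1) by (auto simp: append_eq_append_conv2)
  with assms(2) that show thesis by auto
qed

lemma append_eq_append_longer_prefix:
  assumes "x @ c # s = x' @ t" and "length x < length x'"
  obtains z where "x' = x @ c # z"
proof -
  obtain r where "x' = x @ r"
    using append_eq_append_prefix[OF assms(1) less_imp_le[OF assms(2)]] .
  with assms that show thesis by (cases r) auto
qed

lemma append_eq_append_longer_suffix:
  assumes "s @ c # y = t @ y'" and "length y < length y'"
  obtains z where "y' = z @ c # y"
proof -
  have "(s @ [c]) @ y = t @ y'" using assms(1) by simp
  then obtain r where "y' = r @ y"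
    using append_eq_append_suffix less_imp_le[OF assms(2)] by blast
  with assms that show thesis by (cases r rule: rev_cases) auto
qed

lemma subst_word_Nil [simp]: "subst_word \<tau> [] = []"
  by (simp add: subst_word_def)

lemma subst_word_Cons [simp]: "subst_word \<tau> (c # x) = \<tau> c @ subst_word \<tau> x"
  by (simp add: subst_word_def)

lemma subst_word_append [simp]: "subst_word \<tau> (x @ y) = subst_word \<tau> x @ subst_word \<tau> y"
  by (simp add: subst_word_def)

lemma length_subst_word_ge:
  assumes "\<forall>c. \<tau> c \<noteq> []"
  shows "length x \<le> length (subst_word \<tau> x)"
proof (induction x)
  case (Cons c x)
  have "0 < length (\<tau> c)" using assms by simp
  with Cons show ?case by (simp del: length_greater_0_conv)
qed simp

lemma subst_lang_factor:
  assumes "x @ u @ y \<in> subst_lang \<tau>"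
  shows "u \<in> subst_lang \<tau>"
proof -
  from assms obtain c n w\<^sub>1 w\<^sub>2 where "n \<ge> 1"
    and "(subst_word \<tau> ^^ n) [c] = w\<^sub>1 @ (x @ u @ y) @ w\<^sub>2"
    unfolding subst_lang_def is_factor_def by blast
  then have "(subst_word \<tau> ^^ n) [c] = (w\<^sub>1 @ x) @ u @ (y @ w\<^sub>2)" by simp
  with \<open>n \<ge> 1\<close> show ?thesis unfolding subst_lang_def is_factor_def by blast
qed

lemma ext_step_generator: "ext_step \<tau> g g' \<Longrightarrow> generator \<tau> g"
  by (induction rule: ext_step.induct)

lemma ext_step_gen_length: "ext_step \<tau> g g' \<Longrightarrow> gen_length g' = Suc (gen_length g)"
  by (induction rule: ext_step.induct) (simp_all add: gen_length_def)

lemma ext_step_not_basic: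
  assumes "ext_step \<tau> g' g"
  shows "\<not> basic \<tau> g"
proof -
  have "G_related \<tau> g g'"
    unfolding G_related_def using assms by (blast intro: r_into_rtranclp)
  moreover have "generator \<tau> g'"
    using ext_step_generator[OF assms] .
  moreover have "gen_length g' < gen_length g"
    using ext_step_gen_length[OF assms] by simp
  ultimately show ?thesis
    unfolding basic_def by blast
qed

lemma left_ext_of_short_image:
  assumes "generator \<tau> (v, a # u, w)" and "u \<noteq> []" and "length (\<tau> a) \<le> length v"
  obtains v' where "v = \<tau> a @ v'" and "ext_step \<tau> (v' @ [a], u, w) (v, a # u, w)"
proof -
  have img: "\<tau> a @ subst_word \<tau> u = v @ a # u @ w" and "u \<in> subst_lang \<tau>"
    using assms(1) subst_lang_factor[of "[a]" u "[]"] by (auto simp: generator_def)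
  obtain v' where v': "v = \<tau> a @ v'"
    using append_eq_append_prefix[OF img assms(3)] .
  with img have "subst_word \<tau> u = (v' @ [a]) @ u @ w" by simp
  with \<open>u \<in> subst_lang \<tau>\<close> assms(1,2) have "generator \<tau> (v' @ [a], u, w)"
    by (simp add: generator_def)
  from ext_step.left_ext[OF this] v' show thesis by (simp add: that)
qed

lemma right_ext_of_short_image:
  assumes "generator \<tau> (v, u @ [b], w)" and "u \<noteq> []" and "length (\<tau> b) \<le> length w"
  obtains w' where "w = w' @ \<tau> b" and "ext_step \<tau> (v, u, b # w') (v, u @ [b], w)"
proof -
  have img: "subst_word \<tau> u @ \<tau> b = (v @ u @ [b]) @ w" and "u \<in> subst_lang \<tau>"
    using assms(1) subst_lang_factor[of "[]" u "[b]"] by (auto simp: generator_def)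
  obtain w' where w': "w = w' @ \<tau> b"
    using append_eq_append_suffix[OF img assms(3)] .
  with img have "subst_word \<tau> u = v @ u @ b # w'" by simp
  with \<open>u \<in> subst_lang \<tau>\<close> assms(1,2) have "generator \<tau> (v, u, b # w')"
    by (simp add: generator_def)
  from ext_step.right_ext[OF this] w' show thesis by (simp add: that)
qed

lemma ext_steps_wings:
  assumes "(ext_step \<tau>)\<^sup>*\<^sup>* (v, U, w) (V, U', W)"
  obtains x y where "U' = x @ U @ y" and "subst_word \<tau> x @ v = V @ x"
    and "w @ subst_word \<tau> y = y @ W"
  using assms
proof (induction "(V, U', W)" arbitrary: V U' W thesis rule: rtranclp_induct)
  case base
  show ?case by (rule base.prems[of "[]" "[]"]) simp_all
next
  case (step g)
  obtain V\<^sub>0 U\<^sub>0 W\<^sub>0 where g: "g = (V\<^sub>0, U\<^sub>0, W\<^sub>0)" by (cases g)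
  obtain x y where xy: "U\<^sub>0 = x @ U @ y" "subst_word \<tau> x @ v = V\<^sub>0 @ x"
    "w @ subst_word \<tau> y = y @ W\<^sub>0"
    using step.hyps(3) g by blast
  from step.hyps(2) show ?case unfolding g
  proof cases
    case (right_ext c)
    with xy show ?thesis by (intro step.prems[of x "y @ [c]"]) auto
  next
    case (left_ext _ c)
    with xy show ?thesis by (intro step.prems[of "c # x" y]) auto
  qed
qed

lemma image_le_left_wing:
  assumes "\<forall>c. \<tau> c \<noteq> []" and "v' \<noteq> []"
    and "subst_word \<tau> x @ v = V @ x" and "subst_word \<tau> (x @ c # z) @ v' = V @ x @ c # z"
  shows "length (\<tau> c) \<le> length v"
proof -
  have "length (subst_word \<tau> x) + length v = length V + length x"
    using arg_cong[OF assms(3), of length] by simp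
  moreover have "length (subst_word \<tau> x) + length (\<tau> c) + length (subst_word \<tau> z) + length v'
      = length V + length x + Suc (length z)"
    using arg_cong[OF assms(4), of length] by simp
  moreover have "length z \<le> length (subst_word \<tau> z)"
    using length_subst_word_ge[OF assms(1)] .
  moreover have "0 < length v'" using assms(2) by simp
  ultimately show ?thesis by linarith
qed

lemma image_le_right_wing:
  assumes "\<forall>c. \<tau> c \<noteq> []" and "w' \<noteq> []"
    and "w @ subst_word \<tau> y = y @ W" and "w' @ subst_word \<tau> (z @ c # y) = (z @ c # y) @ W"
  shows "length (\<tau> c) \<le> length w"
proof -
  have "length w + length (subst_word \<tau> y) = length y + length W"
    using arg_cong[OF assms(3), of length] by simp
  moreover have "length w' + length (subst_word \<tau> z) + length (\<tau> c) + length (subst_word \<tau> y)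
      = Suc (length z) + length y + length W"
    using arg_cong[OF assms(4), of length] by simp
  moreover have "length z \<le> length (subst_word \<tau> z)"
    using length_subst_word_ge[OF assms(1)] .
  moreover have "0 < length w'" using assms(2) by simp
  ultimately show ?thesis by linarith
qed

lemma basic_if_images_exceed_wings:
  assumes nonerasing: "\<forall>c. \<tau> c \<noteq> []" and gen: "generator \<tau> (v, a # u @ [b], w)"
    and "length v < length (\<tau> a)" and "length w < length (\<tau> b)"
  shows "basic \<tau> (v, a # u @ [b], w)"
  unfolding basic_def
proof (intro conjI notI gen)
  assume "\<exists>g'. generator \<tau> g' \<and> G_related \<tau> (v, a # u @ [b], w) g'
    \<and> gen_length g' < gen_length (v, a # u @ [b], w)"
  then obtain g' g where "generator \<tau> g'"
    and to: "(ext_step \<tau>)\<^sup>*\<^sup>* (v, a # u @ [b], w) g" and "(ext_step \<tau>)\<^sup>*\<^sup>* g' g"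
    and "gen_length g' < gen_length (v, a # u @ [b], w)"
    unfolding G_related_def by blast
  moreover obtain v' U' w' where "g' = (v', U', w')" by (cases g')
  moreover obtain V U W where "g = (V, U, W)" by (cases g)
  ultimately have gen': "generator \<tau> (v', U', w')"
    and to: "(ext_step \<tau>)\<^sup>*\<^sup>* (v, a # u @ [b], w) (V, U, W)"
    and to': "(ext_step \<tau>)\<^sup>*\<^sup>* (v', U', w') (V, U, W)"
    and shorter: "length U' < length (a # u @ [b])"
    by (simp_all add: gen_length_def)
  obtain x y where U: "U = x @ (a # u @ [b]) @ y"
    and x: "subst_word \<tau> x @ v = V @ x" and y: "w @ subst_word \<tau> y = y @ W"
    using ext_steps_wings[OF to] .
  obtain x' y' where U': "U = x' @ U' @ y'"
    and x': "subst_word \<tau> x' @ v' = V @ x'" and y': "w' @ subst_word \<tau> y' = y' @ W"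
    using ext_steps_wings[OF to'] .
  have "v' \<noteq> []" "w' \<noteq> []" using gen' by (auto simp: generator_def)
  have centre_start: "x @ a # (u @ [b] @ y) = x' @ (U' @ y')"
    and centre_end: "(x @ a # u) @ b # y = (x' @ U') @ y'"
    using U U' by simp_all
  have "length x + length (a # u @ [b]) + length y = length x' + length U' + length y'"
    using arg_cong[OF U[unfolded U'], of length] by simp
  with shorter consider "length x < length x'" | "length y < length y'" by linarith
  then show False
  proof cases
    case 1
    with centre_start obtain z where "x' = x @ a # z"
      by (rule append_eq_append_longer_prefix)
    with nonerasing \<open>v' \<noteq> []\<close> x x' have "length (\<tau> a) \<le> length v"
      by (intro image_le_left_wing) auto
    with assms(3) show False by simp
  next
    case 2
    with centre_end obtain z where "y' = z @ b # y"
      by (rule append_eq_append_longer_suffix)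
    with nonerasing \<open>w' \<noteq> []\<close> y y' have "length (\<tau> b) \<le> length w"
      by (intro image_le_right_wing) auto
    with assms(4) show False by simp
  qed
qed

theorem mainTheorem2:
  fixes \<tau> :: "'a::finite \<Rightarrow> 'a list"
    and v u w :: "'a list" and a b :: 'a
  assumes "\<forall>c. \<tau> c \<noteq> []"
    and "generator \<tau> (v, a # u @ [b], w)"
  shows "basic \<tau> (v, a # u @ [b], w) \<longleftrightarrow> length (\<tau> a) > length v \<and> length (\<tau> b) > length w"
proof
  assume basic: "basic \<tau> (v, a # u @ [b], w)"
  show "length (\<tau> a) > length v \<and> length (\<tau> b) > length w"
  proof (rule ccontr)
    assume "\<not> ?thesis"
    then consider "length (\<tau> a) \<le> length v" | "length (\<tau> b) \<le> length w" by linarith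
    then show False
    proof cases
      case 1
      with assms(2) obtain v' where "ext_step \<tau> (v' @ [a], u @ [b], w) (v, a # u @ [b], w)"
        by (elim left_ext_of_short_image) simp_all
      with basic show False by (auto dest: ext_step_not_basic)
    next
      case 2
      from assms(2) have "generator \<tau> (v, (a # u) @ [b], w)" by simp
      with 2 obtain w' where "ext_step \<tau> (v, a # u, b # w') (v, (a # u) @ [b], w)"
        by (elim right_ext_of_short_image) simp_all
      with basic show False by (auto dest: ext_step_not_basic)
    qed
  qed
next
  assume "length (\<tau> a) > length v \<and> length (\<tau> b) > length w"
  with assms show "basic \<tau> (v, a # u @ [b], w)"
    by (intro basic_if_images_exceed_wings) auto
qed

end
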